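(* Let $r\ge 1$ and $q\ge 4$ be integers, and let $G$ be a minimal graph in $H_v(2_r;q-1)$. Then $$F_v(2_r;q-1)\ge F_v(2_r;q)+\alpha(G)-1.$$
   Context: All graphs are finite, simple and undirected. $\mathrm{cl}(G)$ is the clique number and $\alpha(G)$ the independence number of $G$. $G\overset{v}{\to}(2_r)$ means that in every partition of $V(G)$ into $r$ pairwise disjoint parts some part contains an edge (equivalently $\chi(G)\ge r+1$). $H_v(2_r;q)$ is the set of graphs $G$ with $G\overset{v}{\to}(2_r)$ and $\mathrm{cl}(G)<q$; $F_v(2_r;q)=\min\{|V(G)|:G\in H_v(2_r;q)\}$ (which exists iff $q\ge 3$). A graph $G_0$ in a nonempty set $\mathcal M$ of graphs is minimal in $\mathcal M$ if $|V(G_0)|=\min\{|V(G)|:G\in\mathcal M\}$. *)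

theory Defs
  imports Main
begin

definition sgraph :: "'a set \<Rightarrow> 'a set set \<Rightarrow> bool" where
  "sgraph V E \<longleftrightarrow> finite V \<and> (\<forall>e\<in>E. e \<subseteq> V \<and> card e = 2)"

definition is_clique :: "'a set \<Rightarrow> 'a set set \<Rightarrow> 'a set \<Rightarrow> bool" where
  "is_clique V E K \<longleftrightarrow> K \<subseteq> V \<and> (\<forall>x\<in>K. \<forall>y\<in>K. x \<noteq> y \<longrightarrow> {x, y} \<in> E)"

definition is_indep :: "'a set \<Rightarrow> 'a set set \<Rightarrow> 'a set \<Rightarrow> bool" where
  "is_indep V E I \<longleftrightarrow> I \<subseteq> V \<and> (\<forall>x\<in>I. \<forall>y\<in>I. {x, y} \<notin> E)"

definition clique_num :: "'a set \<Rightarrow> 'a set set \<Rightarrow> nat" where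
  "clique_num V E = Max (card ` {K. is_clique V E K})"

definition indep_num :: "'a set \<Rightarrow> 'a set set \<Rightarrow> nat" where
  "indep_num V E = Max (card ` {I. is_indep V E I})"

text \<open>G -v-> (2_r): every partition of V into r (possibly empty) pairwise disjoint
  parts, given by the part index f x < r of each vertex x, has a part containing an edge.\<close>
definition vertex_arrows :: "'a set \<Rightarrow> 'a set set \<Rightarrow> nat \<Rightarrow> bool" where
  "vertex_arrows V E r \<longleftrightarrow>
     (\<forall>f. (\<forall>x\<in>V. f x < r) \<longrightarrow> (\<exists>e\<in>E. \<exists>i<r. \<forall>x\<in>e. f x = i))"

text \<open>H_v(2_r;q), with vertices taken from nat (every finite graph is isomorphic to one
  on a finite subset of nat).\<close>
definition Hv :: "nat \<Rightarrow> nat \<Rightarrow> (nat set \<times> nat set set) set" where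
  "Hv r q = {(V, E). sgraph V E \<and> vertex_arrows V E r \<and> clique_num V E < q}"

definition Fv :: "nat \<Rightarrow> nat \<Rightarrow> nat" where
  "Fv r q = (LEAST n. \<exists>G\<in>Hv r q. card (fst G) = n)"

end

theory Submission
  imports Defs
begin

(* Let G = (V, E) be a minimal graph in H_v(2_r; q-1) and let A be
   an independent set of G of size alpha(G).  Delete A from G and add a new apex vertex
   joined to every remaining vertex.  The resulting graph G' still arrows (2_r): from an
   r-colouring of G' colour all of A with the colour of the apex; the monochromatic edge
   this yields in G either avoids A (and survives in G') or, A being independent, joins A
   to a vertex b outside A, and then the apex and b form a monochromatic edge of G'.
   A clique of G' is a clique of G plus at most the apex, so cl(G') < q.  Hence
   F_v(2_r; q) <= |V(G')| = |V| - alpha(G) + 1 = F_v(2_r; q-1) - alpha(G) + 1.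
   The file first collects basic facts on clique and independence numbers, then shows
   that the defining properties of H_v are invariant under injective relabelling (so that
   F_v, defined via graphs on nat, bounds graphs on any vertex type), then analyses the
   apex construction, and finally derives the theorem. *)

lemma clique_num_less_iff:
  assumes "finite V"
  shows "clique_num V E < q \<longleftrightarrow> (\<forall>K. is_clique V E K \<longrightarrow> card K < q)"
proof -
  have "finite {K. is_clique V E K}"
    by (rule finite_subset[of _ "Pow V"]) (auto simp: is_clique_def assms)
  moreover have "{} \<in> {K. is_clique V E K}" by (simp add: is_clique_def)
  ultimately show ?thesis unfolding clique_num_def by (subst Max_less_iff) auto
qed

lemma indep_num_attained:
  assumes "finite V"
  obtains A where "is_indep V E A" "card A = indep_num V E"
proof -
  have "finite {I. is_indep V E I}"
    by (rule finite_subset[of _ "Pow V"]) (auto simp: is_indep_def assms)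
  moreover have "{} \<in> {I. is_indep V E I}" by (simp add: is_indep_def)
  ultimately have "indep_num V E \<in> card ` {I. is_indep V E I}"
    unfolding indep_num_def by (intro Max_in) auto
  then show ?thesis using that by auto
qed

lemma edge_not_in_indep:
  assumes "is_indep V E A" "e \<in> E" "card e = 2"
  shows "\<not> e \<subseteq> A"
proof
  assume "e \<subseteq> A"
  obtain x y where "e = {x, y}" using \<open>card e = 2\<close> by (auto simp: card_2_iff)
  then show False using assms \<open>e \<subseteq> A\<close> unfolding is_indep_def by auto
qed

lemma sgraph_image:
  assumes "inj_on h V" "sgraph V E"
  shows "sgraph (h ` V) ((`) h ` E)"
  unfolding sgraph_def
proof (intro conjI ballI)
  show "finite (h ` V)" using assms(2) by (simp add: sgraph_def)
next
  fix e' assume "e' \<in> (`) h ` E"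
  then obtain e where e: "e \<in> E" "e' = h ` e" by auto
  then have "e \<subseteq> V" "card e = 2" using assms(2) by (auto simp: sgraph_def)
  moreover from \<open>e \<subseteq> V\<close> have "inj_on h e" using assms(1) by (rule inj_on_subset[rotated])
  ultimately show "e' \<subseteq> h ` V" "card e' = 2" using e by (auto simp: card_image)
qed

text \<open>A colouring of the relabelled graph pulls back along h to a colouring of the original.\<close>
lemma vertex_arrows_image:
  assumes "vertex_arrows V E r"
  shows "vertex_arrows (h ` V) ((`) h ` E) r"
  unfolding vertex_arrows_def
proof (intro allI impI)
  fix f :: "_ \<Rightarrow> nat" assume "\<forall>x\<in>h ` V. f x < r"
  then have "\<forall>x\<in>V. (f \<circ> h) x < r" by auto
  then obtain e i where "e \<in> E" "i < r" "\<forall>x\<in>e. (f \<circ> h) x = i"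
    using assms unfolding vertex_arrows_def by blast
  then show "\<exists>e\<in>(`) h ` E. \<exists>i<r. \<forall>x\<in>e. f x = i" by auto
qed

lemma clique_image:
  assumes inj: "inj_on h V" and sg: "sgraph V E" and K: "is_clique (h ` V) ((`) h ` E) K"
  shows "\<exists>K0. is_clique V E K0 \<and> K = h ` K0"
proof (intro exI conjI)
  define K0 where "K0 = V \<inter> h -` K"
  show "K = h ` K0" using K unfolding K0_def is_clique_def by auto
  show "is_clique V E K0"
    unfolding is_clique_def
  proof (intro conjI ballI impI)
    show "K0 \<subseteq> V" by (auto simp: K0_def)
  next
    fix x y assume xy: "x \<in> K0" "y \<in> K0" "x \<noteq> y"
    then have "h x \<noteq> h y" using inj by (auto simp: K0_def inj_on_def)
    with xy have "{h x, h y} \<in> (`) h ` E" using K unfolding is_clique_def K0_def by blast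
    then obtain e where e: "e \<in> E" "h ` e = h ` {x, y}" by auto
    have "e \<subseteq> V" using sg e(1) by (auto simp: sgraph_def)
    moreover have "{x, y} \<subseteq> V" using xy by (auto simp: K0_def)
    ultimately have "e = {x, y}" using inj_on_image_eq_iff[OF inj] e(2) by blast
    then show "{x, y} \<in> E" using e by simp
  qed
qed

text \<open>F_v(2_r; q) is a lower bound for the order of every graph, on any vertex type, that
  arrows (2_r) and has no q-clique: relabel its vertices by an initial segment of nat.\<close>
lemma Fv_le_card:
  fixes V :: "'b set"
  assumes sg: "sgraph V E" and ar: "vertex_arrows V E r"
    and cl: "\<forall>K. is_clique V E K \<longrightarrow> card K < q"
  shows "Fv r q \<le> card V"
proof -
  have fV: "finite V" using sg by (simp add: sgraph_def)
  obtain h :: "'b \<Rightarrow> nat" where "bij_betw h V {0..<card V}"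
    using ex_bij_betw_finite_nat[OF fV] by blast
  then have inj: "inj_on h V" by (simp add: bij_betw_def)
  have "\<forall>K. is_clique (h ` V) ((`) h ` E) K \<longrightarrow> card K < q"
  proof (intro allI impI)
    fix K assume "is_clique (h ` V) ((`) h ` E) K"
    then obtain K0 where "is_clique V E K0" "K = h ` K0" using clique_image[OF inj sg] by blast
    moreover have "finite K0" using \<open>is_clique V E K0\<close> fV
      by (auto simp: is_clique_def intro: finite_subset)
    ultimately show "card K < q" using cl card_image_le[of K0 h] by fastforce
  qed
  then have "(h ` V, (`) h ` E) \<in> Hv r q"
    using sgraph_image[OF inj sg] vertex_arrows_image[OF ar] fV
    by (simp add: Hv_def clique_num_less_iff)
  moreover have "card (h ` V) = card V" using inj by (simp add: card_image)
  ultimately show ?thesis unfolding Fv_def by (intro Least_le) force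
qed

text \<open>The graph obtained from (V, E) by deleting A and adding a new vertex None adjacent
  to every remaining vertex; the old vertices x are renamed Some x.\<close>
definition apex_vertices :: "'a set \<Rightarrow> 'a set \<Rightarrow> 'a option set" where
  "apex_vertices V A = insert None (Some ` (V - A))"

definition apex_edges :: "'a set \<Rightarrow> 'a set set \<Rightarrow> 'a set \<Rightarrow> 'a option set set" where
  "apex_edges V E A =
     (`) Some ` {e \<in> E. e \<subseteq> V - A} \<union> {{None, Some v} | v. v \<in> V - A}"

lemma card_apex_vertices:
  assumes "finite V" "A \<subseteq> V"
  shows "card (apex_vertices V A) = card V - card A + 1"
  using assms by (simp add: apex_vertices_def card_image card_Diff_subset finite_subset)

lemma sgraph_apex:
  assumes "sgraph V E"
  shows "sgraph (apex_vertices V A) (apex_edges V E A)"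
  unfolding sgraph_def
proof (rule conjI[OF _ ballI])
  show "finite (apex_vertices V A)" using assms by (simp add: sgraph_def apex_vertices_def)
next
  fix e' assume "e' \<in> apex_edges V E A"
  then consider (old) e where "e \<in> E" "e \<subseteq> V - A" "e' = Some ` e"
    | (apex) v where "v \<in> V - A" "e' = {None, Some v}"
    unfolding apex_edges_def by blast
  then show "e' \<subseteq> apex_vertices V A \<and> card e' = 2"
  proof cases
    case old
    then show ?thesis using assms by (auto simp: sgraph_def card_image apex_vertices_def)
  qed (auto simp: apex_vertices_def)
qed

text \<open>If A is independent, the apex graph still arrows (2_r): colour A like the apex.\<close>
lemma vertex_arrows_apex:
  assumes sg: "sgraph V E" and ar: "vertex_arrows V E r" and A: "is_indep V E A"
  shows "vertex_arrows (apex_vertices V A) (apex_edges V E A) r"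
  unfolding vertex_arrows_def
proof (intro allI impI)
  fix f :: "_ \<Rightarrow> nat" assume f: "\<forall>x\<in>apex_vertices V A. f x < r"
  define g where "g x = (if x \<in> A then f None else f (Some x))" for x
  have "\<forall>x\<in>V. g x < r" using f by (auto simp: g_def apex_vertices_def)
  then obtain e j where e: "e \<in> E" "j < r" and mono: "\<forall>x\<in>e. g x = j"
    using ar unfolding vertex_arrows_def by blast
  have eV: "e \<subseteq> V" "card e = 2" using sg e(1) by (auto simp: sgraph_def)
  show "\<exists>e'\<in>apex_edges V E A. \<exists>i<r. \<forall>x\<in>e'. f x = i"
  proof (cases "e \<inter> A = {}")
    case True
    then have "Some ` e \<in> apex_edges V E A" using e eV by (auto simp: apex_edges_def)
    moreover have "\<forall>x\<in>Some ` e. f x = j" using mono True by (force simp: g_def)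
    ultimately show ?thesis using e(2) by blast
  next
    case False
    then obtain a where a: "a \<in> e" "a \<in> A" by auto
    obtain b where b: "b \<in> e" "b \<notin> A" using edge_not_in_indep[OF A e(1) eV(2)] by auto
    have "g a = j" "g b = j" using mono a(1) b(1) by auto
    then have "f (Some b) = f None" using a(2) b(2) by (simp add: g_def)
    moreover have "{None, Some b} \<in> apex_edges V E A" using b eV by (auto simp: apex_edges_def)
    moreover have "f None < r" using f by (simp add: apex_vertices_def)
    ultimately show ?thesis by (intro bexI[of _ "{None, Some b}"]) auto
  qed
qed

lemma clique_apex_old_part:
  assumes "is_clique (apex_vertices V A) (apex_edges V E A) K"
  shows "is_clique V E {x. Some x \<in> K}"
  unfolding is_clique_def
proof (intro conjI ballI impI)
  show "{x. Some x \<in> K} \<subseteq> V" using assms by (auto simp: is_clique_def apex_vertices_def)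
next
  fix x y assume "x \<in> {x. Some x \<in> K}" "y \<in> {x. Some x \<in> K}" "x \<noteq> y"
  then have "{Some x, Some y} \<in> apex_edges V E A" using assms by (auto simp: is_clique_def)
  then obtain e where e: "e \<in> E" "Some ` e = Some ` {x, y}"
    by (auto simp: apex_edges_def doubleton_eq_iff)
  then have "e = {x, y}" by (metis inj_Some inj_image_eq_iff)
  then show "{x, y} \<in> E" using e by simp
qed

lemma clique_bound_apex:
  assumes fV: "finite V" and cl: "\<forall>K. is_clique V E K \<longrightarrow> card K < q"
    and K: "is_clique (apex_vertices V A) (apex_edges V E A) K"
  shows "card K < Suc q"
proof -
  define K0 where "K0 = {x. Some x \<in> K}"
  have "card K0 < q" using cl clique_apex_old_part[OF K] by (simp add: K0_def)
  moreover have "finite K0" using fV clique_apex_old_part[OF K] finite_subset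
    by (auto simp: K0_def is_clique_def)
  moreover have "K \<subseteq> insert None (Some ` K0)"
  proof
    fix x assume "x \<in> K"
    then show "x \<in> insert None (Some ` K0)" by (cases x) (auto simp: K0_def)
  qed
  ultimately have "card K \<le> card (insert None (Some ` K0))"
    by (intro card_mono) auto
  also have "\<dots> = card K0 + 1" using \<open>finite K0\<close> by (simp add: card_image)
  finally have "card K \<le> card K0 + 1" .
  with \<open>card K0 < q\<close> show ?thesis by linarith
qed

theorem lemma2p1:
  fixes r q :: nat and V :: "'a set" and E :: "'a set set"
  assumes "r \<ge> 1" and "q \<ge> 4"
    and "sgraph V E" and "vertex_arrows V E r" and "clique_num V E < q - 1"
    and "card V = Fv r (q - 1)"
  shows "Fv r (q - 1) \<ge> Fv r q + indep_num V E - 1"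
proof -
  have fV: "finite V" using assms(3) by (simp add: sgraph_def)
  obtain A where A: "is_indep V E A" "card A = indep_num V E"
    using indep_num_attained[OF fV] by blast
  have AV: "A \<subseteq> V" using A(1) by (simp add: is_indep_def)
  have cl: "\<forall>K. is_clique V E K \<longrightarrow> card K < q - 1"
    using assms(5) clique_num_less_iff[OF fV] by blast
  text \<open>Since q - 1 \<ge> 1, the bound q - 1 rises to exactly q in the apex graph.\<close>
  have "\<forall>K. is_clique (apex_vertices V A) (apex_edges V E A) K \<longrightarrow> card K < q"
    using clique_bound_apex[OF fV cl] assms(2) by fastforce
  then have "Fv r q \<le> card (apex_vertices V A)"
    using Fv_le_card sgraph_apex[OF assms(3)] vertex_arrows_apex[OF assms(3,4) A(1)] by blast
  moreover have "card A \<le> card V" using fV AV by (simp add: card_mono)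
  ultimately show ?thesis
    using card_apex_vertices[OF fV AV] assms(6) A(2) by linarith
qed

end
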